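(* Write \[ \frac{2q J_{10}^6}{J_{2,10}^2 J_{3,10}^2} = \sum_{n\ge 1} b'(n) q^n . \] Then $b'(n) \ge 2\lfloor (n-1)/6 \rfloor$ for all $n \ge 1$.
   Context: Notation: $(a;q)_\infty = \prod_{i\ge 0}(1-aq^i)$ and $(a_1,\dots,a_k;q)_\infty = (a_1;q)_\infty\cdots(a_k;q)_\infty$. For positive integers $a<b$: $J_b = (q^b;q^b)_\infty$ and $J_{a,b} = (q^a, q^{b-a}, q^b; q^b)_\infty$. *)

theory Defs
  imports "HOL-Computational_Algebra.Formal_Power_Series"
begin

definition qpoch_fin :: "nat \<Rightarrow> nat \<Rightarrow> nat \<Rightarrow> 'a::comm_ring_1 fps" where
  "qpoch_fin a b N = (\<Prod>i<N. 1 - fps_X ^ (a + b * i))"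

text \<open>Infinite product (q^a; q^b)_infinity for a, b >= 1: the n-th coefficient is already
  determined by the first n+1 factors, since factor i has q-exponent a + b*i >= i + 1.\<close>
definition qpoch :: "nat \<Rightarrow> nat \<Rightarrow> 'a::comm_ring_1 fps" where
  "qpoch a b = Abs_fps (\<lambda>n. fps_nth (qpoch_fin a b (Suc n)) n)"

definition J :: "nat \<Rightarrow> 'a::comm_ring_1 fps" where
  "J b = qpoch b b"

definition Jab :: "nat \<Rightarrow> nat \<Rightarrow> 'a::comm_ring_1 fps" where
  "Jab a b = qpoch a b * qpoch (b - a) b * qpoch b b"

definition bprime :: "nat \<Rightarrow> rat" where
  "bprime n = fps_nth (2 * fps_X * J 10 ^ 6 / (Jab 2 10 ^ 2 * Jab 3 10 ^ 2)) n"

end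

theory Submission
  imports Defs
begin

text \<open>Since J_{a,10} = (q^a, q^{10-a}; q^10)_\<infinity> J_10, the series equals 2q G^2 with
  G = J_10 / (q^2, q^3, q^7, q^8; q^10)_\<infinity>. Pairing each factor of J_10 with two factors of the
  denominator writes G as 1/(1-q^7) times factors
  (1 - q^{a+c}) / ((1 - q^a)(1 - q^c)) = 1/(1 - q^a) + q^c/(1 - q^c)
  with (a,c) = (2+10i, 8+10i) and (3+10i, 17+10i). All of these are coefficientwise at least 1,
  and the two factors with i = 0 dominate 1/(1-q^2) and 1/(1-q^3). Hence G^2 \<ge> G dominates
  1/((1-q^2)(1-q^3)), whose coefficient of q^m counts the partitions of m into parts 2 and 3 and
  is at least \<lfloor>m/6\<rfloor>. The infinite products enter only through finite truncations, which agree
  with them up to any prescribed degree.\<close>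

unbundle fps_syntax

definition fps_le :: "'a::ord fps \<Rightarrow> 'a fps \<Rightarrow> bool" where
  "fps_le f g \<longleftrightarrow> (\<forall>n. f $ n \<le> g $ n)"

lemma fps_le_refl: "fps_le (f :: 'a::preorder fps) f"
  by (simp add: fps_le_def)

lemma fps_le_trans: "fps_le (f :: 'a::preorder fps) g \<Longrightarrow> fps_le g h \<Longrightarrow> fps_le f h"
  unfolding fps_le_def by (meson order_trans)

lemma fps_le_nth: "fps_le f g \<Longrightarrow> f $ n \<le> g $ n"
  by (simp add: fps_le_def)

lemma fps_le_zero_if_fps_le_one: "fps_le 1 (f :: 'a::linordered_semidom fps) \<Longrightarrow> fps_le 0 f"
  unfolding fps_le_def by (metis fps_one_nth fps_zero_nth order.trans zero_le_one order_refl)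

lemma fps_le_mult:
  fixes f g f' g' :: "'a::linordered_semiring fps"
  assumes "fps_le 0 f'" "fps_le 0 g'" "fps_le f' f" "fps_le g' g"
  shows "fps_le (f' * g') (f * g)"
  unfolding fps_le_def fps_mult_nth
proof
  fix n
  have "0 \<le> f' $ i" "0 \<le> g' $ i" "f' $ i \<le> f $ i" "g' $ i \<le> g $ i" for i
    using assms by (simp_all add: fps_le_def)
  then show "(\<Sum>i = 0..n. f' $ i * g' $ (n - i)) \<le> (\<Sum>i = 0..n. f $ i * g $ (n - i))"
    by (intro sum_mono mult_mono) (auto intro: order_trans)
qed

lemma fps_le_mult_one_right:
  fixes f g h :: "'a::linordered_semidom fps"
  assumes "fps_le 0 h" "fps_le h f" "fps_le 1 g"
  shows "fps_le h (f * g)"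
  using fps_le_mult[OF assms(1) _ assms(2,3)] by (simp add: fps_le_def)

lemma fps_le_one_mult:
  fixes f g :: "'a::linordered_semidom fps"
  shows "fps_le 1 f \<Longrightarrow> fps_le 1 g \<Longrightarrow> fps_le 1 (f * g)"
  using fps_le_mult_one_right[of 1 f g] by (simp add: fps_le_def)

lemma fps_le_one_prod:
  fixes f :: "'b \<Rightarrow> 'a::linordered_semidom fps"
  shows "(\<And>i. i \<in> I \<Longrightarrow> fps_le 1 (f i)) \<Longrightarrow> fps_le 1 (\<Prod>i\<in>I. f i)"
  by (induction I rule: infinite_finite_induct) (auto simp: fps_le_refl fps_le_one_mult)

lemma fps_inverse_one_minus_X_power_nth:
  assumes "k \<ge> 1"
  shows "inverse (1 - fps_X ^ k :: 'a::field fps) $ n = (if k dvd n then 1 else 0)"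
proof -
  define g :: "'a fps" where "g = Abs_fps (\<lambda>n. if k dvd n then 1 else 0)"
  have "(1 - fps_X ^ k) * g = 1"
  proof (rule fps_ext)
    fix n
    show "((1 - fps_X ^ k) * g) $ n = 1 $ n"
      using assms by (auto simp: algebra_simps fps_X_power_mult_nth g_def dvd_minus_self)
  qed
  then have "inverse (1 - fps_X ^ k) = g"
    by (rule fps_inverse_unique)
  then show ?thesis
    by (simp add: g_def)
qed

lemma one_le_inverse_one_minus_X_power:
  "k \<ge> 1 \<Longrightarrow> fps_le 1 (inverse (1 - fps_X ^ k :: 'a::linordered_field fps))"
  by (simp add: fps_le_def fps_inverse_one_minus_X_power_nth)

lemma inverse_one_minus_X_power_pair:
  assumes "a \<ge> 1" "b \<ge> 1"
  shows "(1 - fps_X ^ (a + b)) * inverse (1 - fps_X ^ a) * inverse (1 - fps_X ^ b :: 'a::field fps)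
           = inverse (1 - fps_X ^ a) + fps_X ^ b * inverse (1 - fps_X ^ b)"
proof -
  let ?u = "\<lambda>c. inverse (1 - fps_X ^ c :: 'a fps)"
  have u: "?u c * (1 - fps_X ^ c) = 1" if "c \<ge> 1" for c
    using that by (intro inverse_mult_eq_1) simp
  have "?u a + fps_X ^ b * ?u b = ?u a * (?u b * (1 - fps_X ^ b)) + fps_X ^ b * ?u b * (?u a * (1 - fps_X ^ a))"
    using u[OF assms(1)] u[OF assms(2)] by simp
  also have "\<dots> = (1 - fps_X ^ (a + b)) * ?u a * ?u b"
    by (simp add: algebra_simps power_add)
  finally show ?thesis
    by simp
qed

lemma inverse_one_minus_X_power_le_pair:
  fixes a b :: nat
  defines "T \<equiv> (1 - fps_X ^ (a + b)) * inverse (1 - fps_X ^ a) * inverse (1 - fps_X ^ b :: 'a::linordered_field fps)"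
  assumes "a \<ge> 1" "b \<ge> 1"
  shows "fps_le (inverse (1 - fps_X ^ a)) T"
proof -
  have "fps_le 0 (fps_X ^ b * inverse (1 - fps_X ^ b :: 'a fps))"
    using assms by (simp add: fps_le_def fps_X_power_mult_nth fps_inverse_one_minus_X_power_nth)
  then show ?thesis
    unfolding T_def inverse_one_minus_X_power_pair[OF assms(2,3)] by (simp add: fps_le_def)
qed

definition parts_2_3_gf :: "'a::field fps" where
  "parts_2_3_gf = inverse (1 - fps_X ^ 2) * inverse (1 - fps_X ^ 3)"

lemma one_le_parts_2_3_gf: "fps_le 1 (parts_2_3_gf :: 'a::linordered_field fps)"
  unfolding parts_2_3_gf_def by (intro fps_le_one_mult one_le_inverse_one_minus_X_power) simp_all

lemma parts_2_3_gf_rec: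
  "parts_2_3_gf = (1 + fps_X ^ 2 + fps_X ^ 4) * inverse (1 - fps_X ^ 3) + fps_X ^ 6 * (parts_2_3_gf :: 'a::field fps)"
proof -
  let ?u = "\<lambda>c. inverse (1 - fps_X ^ c :: 'a fps)"
  have "?u 2 * ?u 3 - fps_X ^ 6 * (?u 2 * ?u 3) = (?u 2 * (1 - fps_X ^ 2)) * (1 + fps_X ^ 2 + fps_X ^ 4) * ?u 3"
    by (simp add: algebra_simps flip: power_add)
  also have "?u 2 * (1 - fps_X ^ 2) = 1"
    by (intro inverse_mult_eq_1) simp
  finally show ?thesis
    unfolding parts_2_3_gf_def by (simp only: mult_1_left diff_eq_eq)
qed

lemma parts_2_3_gf_nth_ge: "of_nat (m div 6) \<le> (parts_2_3_gf :: 'a::linordered_field fps) $ m"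
proof (induction m rule: less_induct)
  case (less m)
  show ?case
  proof (cases "m < 6")
    case True
    from fps_le_nth[OF fps_le_zero_if_fps_le_one[OF one_le_parts_2_3_gf], of m] True show ?thesis
      by simp
  next
    case False
    have "3 dvd m \<or> 3 dvd (m - 2) \<or> 3 dvd (m - 4)"
      using False by presburger
    then have "1 \<le> ((1 + fps_X ^ 2 + fps_X ^ 4) * inverse (1 - fps_X ^ 3) :: 'a fps) $ m"
      using False by (auto simp: algebra_simps fps_X_power_mult_nth fps_inverse_one_minus_X_power_nth)
    moreover have "(parts_2_3_gf :: 'a fps) $ m
        = ((1 + fps_X ^ 2 + fps_X ^ 4) * inverse (1 - fps_X ^ 3) :: 'a fps) $ m + parts_2_3_gf $ (m - 6)"
      using False by (subst parts_2_3_gf_rec) (simp add: fps_X_power_mult_nth)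
    moreover have "m div 6 = Suc ((m - 6) div 6)"
      using False by (simp add: div_if)
    ultimately show ?thesis
      using less.IH[of "m - 6"] False by simp
  qed
qed

lemma qpoch_fin_Suc_shift:
  "qpoch_fin a b (Suc N) = (1 - fps_X ^ a) * (qpoch_fin (a + b) b N :: 'a::comm_ring_1 fps)"
  unfolding qpoch_fin_def prod.lessThan_Suc_shift by (simp add: algebra_simps)

lemma qpoch_fin_double:
  "qpoch_fin a b (2 * N) = qpoch_fin a (2 * b) N * (qpoch_fin (a + b) (2 * b) N :: 'a::comm_ring_1 fps)"
  unfolding qpoch_fin_def by (induction N) (simp_all add: algebra_simps)

lemma inverse_qpoch_fin:
  "inverse (qpoch_fin a b N :: 'a::field fps) = (\<Prod>i<N. inverse (1 - fps_X ^ (a + b * i)))"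
  unfolding qpoch_fin_def by (induction N) (simp_all add: fps_inverse_mult)

lemma qpoch_fin_ratio_ge:
  assumes "a \<ge> 1" "c \<ge> 1" "N \<ge> 1"
  shows "fps_le (inverse (1 - fps_X ^ a))
           (qpoch_fin (a + c) (b + d) N * inverse (qpoch_fin a b N * qpoch_fin c d N) :: 'a::linordered_field fps)"
proof -
  define T :: "nat \<Rightarrow> 'a fps" where "T i = (1 - fps_X ^ ((a + b * i) + (c + d * i)))
    * inverse (1 - fps_X ^ (a + b * i)) * inverse (1 - fps_X ^ (c + d * i))" for i
  have "qpoch_fin (a + c) (b + d) N = (\<Prod>i<N. 1 - fps_X ^ ((a + b * i) + (c + d * i)) :: 'a fps)"
    unfolding qpoch_fin_def by (simp add: algebra_simps)
  then have ratio: "qpoch_fin (a + c) (b + d) N * inverse (qpoch_fin a b N * qpoch_fin c d N) = (\<Prod>i<N. T i)"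
    by (simp only: fps_inverse_mult inverse_qpoch_fin T_def prod.distrib mult_ac)
  have "fps_le (inverse (1 - fps_X ^ a)) (T 0)"
    unfolding T_def using inverse_one_minus_X_power_le_pair[OF assms(1,2)] by simp
  moreover have "fps_le 1 (T i)" for i
    using inverse_one_minus_X_power_le_pair[of "a + b * i" "c + d * i"] assms
      one_le_inverse_one_minus_X_power[of "a + b * i"]
    unfolding T_def by (auto intro: fps_le_trans)
  ultimately have "fps_le (inverse (1 - fps_X ^ a)) (T 0 * (\<Prod>i<n. T (Suc i)))" for n
    using one_le_inverse_one_minus_X_power[OF assms(1)]
    by (auto intro!: fps_le_mult_one_right fps_le_one_prod fps_le_zero_if_fps_le_one)
  moreover obtain n where "N = Suc n"
    using assms(3) by (cases N) auto
  ultimately show ?thesis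
    unfolding ratio by (simp only: prod.lessThan_Suc_shift)
qed

lemma fps_cutoff_mult_cong:
  assumes "fps_cutoff n f = fps_cutoff n f'" "fps_cutoff n g = fps_cutoff n g'"
  shows "fps_cutoff n (f * g) = fps_cutoff n (f' * g' :: 'a::comm_semiring_0 fps)"
  unfolding fps_cutoff_eq_fps_cutoff_iff
proof (intro allI impI)
  fix k assume "k < n"
  then have "(f * g) $ k = (fps_cutoff n f * fps_cutoff n g) $ k"
    "(f' * g') $ k = (fps_cutoff n f' * fps_cutoff n g') $ k"
    by (simp_all add: fps_cutoff_left_mult_nth fps_cutoff_right_mult_nth)
  then show "(f * g) $ k = (f' * g') $ k"
    using assms by simp
qed

lemma fps_cutoff_inverse_cong:
  fixes f g :: "'a::field fps"
  assumes "fps_cutoff n f = fps_cutoff n g" "f $ 0 \<noteq> 0"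
  shows "fps_cutoff n (inverse f) = fps_cutoff n (inverse g)"
proof (cases "n = 0")
  case False
  then have "g $ 0 = f $ 0"
    using assms(1) by (metis fps_cutoff_nth gr0I)
  then have "inverse f * (g - f) * inverse g = inverse f * (g * inverse g) - (inverse f * f) * inverse g"
    by (simp only: right_diff_distrib left_diff_distrib mult.assoc)
  also have "\<dots> = inverse f - inverse g"
    using assms(2) \<open>g $ 0 = f $ 0\<close> by (simp add: inverse_mult_eq_1 inverse_mult_eq_1')
  finally have "inverse f - inverse g = inverse f * (g - f) * inverse g" ..
  moreover have "fps_cutoff n (g - f) = fps_cutoff n 0"
    using assms(1) by (simp add: fps_cutoff_diff)
  then have "fps_cutoff n (inverse f * (g - f) * inverse g) = fps_cutoff n (inverse f * 0 * inverse g)"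
    by (intro fps_cutoff_mult_cong) simp_all
  ultimately have "fps_cutoff n (inverse f - inverse g) = 0"
    by simp
  then show ?thesis
    by (simp add: fps_cutoff_diff)
qed simp

lemma qpoch_fin_nth_0: "a \<ge> 1 \<Longrightarrow> qpoch_fin a b N $ 0 = (1 :: 'a::comm_ring_1)"
  unfolding qpoch_fin_def by (induction N) auto

lemma qpoch_nth_0: "a \<ge> 1 \<Longrightarrow> qpoch a b $ 0 = (1 :: 'a::comm_ring_1)"
  unfolding qpoch_def by (simp add: qpoch_fin_nth_0)

lemma fps_cutoff_qpoch_fin:
  assumes "a \<ge> 1" "b \<ge> 1" "n \<le> N"
  shows "fps_cutoff n (qpoch_fin a b N :: 'a::comm_ring_1 fps) = fps_cutoff n (qpoch_fin a b n)"
  using assms(3)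
proof (induction N rule: dec_induct)
  case (step N)
  have "N \<le> b * N"
    using assms(2) by simp
  then have "n < a + b * N"
    using assms(1) step.hyps by linarith
  then have "fps_cutoff n (1 - fps_X ^ (a + b * N) :: 'a fps) = fps_cutoff n 1"
    by (simp add: fps_cutoff_eq_fps_cutoff_iff)
  then have "fps_cutoff n (qpoch_fin a b N * (1 - fps_X ^ (a + b * N)) :: 'a fps) = fps_cutoff n (qpoch_fin a b N * 1)"
    by (intro fps_cutoff_mult_cong) simp_all
  then show ?case
    using step.IH by (simp add: qpoch_fin_def)
qed simp

lemma fps_cutoff_qpoch:
  assumes "a \<ge> 1" "b \<ge> 1" "n \<le> N"
  shows "fps_cutoff n (qpoch a b :: 'a::comm_ring_1 fps) = fps_cutoff n (qpoch_fin a b N)"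
  unfolding fps_cutoff_eq_fps_cutoff_iff
proof (intro allI impI)
  fix k assume "k < n"
  then have "fps_cutoff (Suc k) (qpoch_fin a b N :: 'a fps) = fps_cutoff (Suc k) (qpoch_fin a b (Suc k))"
    using assms by (intro fps_cutoff_qpoch_fin) simp_all
  then show "qpoch a b $ k = (qpoch_fin a b N :: 'a fps) $ k"
    unfolding qpoch_def fps_cutoff_eq_fps_cutoff_iff by simp
qed

definition G10 :: "'a::field fps" where
  "G10 = J 10 * inverse (qpoch 2 10 * qpoch 3 10 * qpoch 7 10 * qpoch 8 10)"

lemma bprime_eq_G10_square_nth:
  assumes "n \<ge> 1"
  shows "bprime n = 2 * (G10 ^ 2) $ (n - 1)"
proof -
  let ?p = "\<lambda>c. qpoch c 10 :: rat fps"
  let ?den = "Jab 2 10 ^ 2 * Jab 3 10 ^ 2 :: rat fps"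
  have Jab: "Jab 2 10 = ?p 2 * ?p 8 * ?p 10" "Jab 3 10 = ?p 3 * ?p 7 * ?p 10"
    by (simp_all add: Jab_def)
  have "?p 10 ^ 6 * inverse (?p 10) ^ 4 = ?p 10 ^ 2 * (?p 10 * inverse (?p 10)) ^ 4"
    by algebra
  also have "?p 10 * inverse (?p 10) = 1"
    by (simp add: inverse_mult_eq_1' qpoch_nth_0)
  finally have "J 10 ^ 6 * inverse ?den = G10 ^ 2"
    unfolding Jab G10_def J_def
    by (simp add: fps_inverse_mult fps_inverse_power algebra_simps)
  moreover have "?den $ 0 = 1"
    unfolding Jab by (simp add: qpoch_nth_0 fps_mult_nth_0 power2_eq_square)
  ultimately have "bprime n = (2 * (fps_X * G10 ^ 2)) $ n"
    unfolding bprime_def by (simp add: fps_divide_unit mult.assoc)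
  then show ?thesis
    using assms by (simp add: fps_X_mult_nth fps_numeral_fps_const)
qed

lemma fps_cutoff_G10:
  assumes "n \<le> N"
  shows "fps_cutoff n (G10 :: 'a::field fps) = fps_cutoff n (qpoch_fin 10 10 (2 * N)
           * inverse (qpoch_fin 2 10 N * qpoch_fin 3 10 N * qpoch_fin 7 10 (Suc N) * qpoch_fin 8 10 N))"
  unfolding G10_def J_def using assms
  by (intro fps_cutoff_mult_cong fps_cutoff_inverse_cong fps_cutoff_qpoch)
     (simp_all add: fps_mult_nth_0 qpoch_nth_0)

lemma G10_fin_ge:
  assumes "N \<ge> 1"
  shows "fps_le parts_2_3_gf
           (qpoch_fin 10 10 (2 * N) * inverse (qpoch_fin 2 10 N * qpoch_fin 3 10 N
              * qpoch_fin 7 10 (Suc N) * qpoch_fin 8 10 N) :: 'a::linordered_field fps)"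
proof -
  let ?u = "\<lambda>c. inverse (1 - fps_X ^ c :: 'a fps)"
  let ?R = "\<lambda>s a c. qpoch_fin s 20 N * inverse (qpoch_fin a 10 N * qpoch_fin c 10 N) :: 'a fps"
  have "qpoch_fin 10 10 (2 * N) = qpoch_fin 10 20 N * (qpoch_fin 20 20 N :: 'a fps)"
    by (simp add: qpoch_fin_double)
  moreover have "qpoch_fin 7 10 (Suc N) = (1 - fps_X ^ 7) * (qpoch_fin 17 10 N :: 'a fps)"
    by (simp add: qpoch_fin_Suc_shift)
  ultimately have "qpoch_fin 10 10 (2 * N) * inverse (qpoch_fin 2 10 N * qpoch_fin 3 10 N
          * qpoch_fin 7 10 (Suc N) * qpoch_fin 8 10 N) = ?R 10 2 8 * ?R 20 3 17 * ?u 7"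
    by (simp only: fps_inverse_mult mult_ac numeral_plus_numeral)
  moreover have "fps_le (?u 2 * ?u 3) (?R 10 2 8 * ?R 20 3 17)"
    using qpoch_fin_ratio_ge[of 2 8 N 10 10] qpoch_fin_ratio_ge[of 3 17 N 10 10] assms
      one_le_inverse_one_minus_X_power[of 2] one_le_inverse_one_minus_X_power[of 3]
    by (intro fps_le_mult fps_le_zero_if_fps_le_one) simp_all
  ultimately show ?thesis
    using one_le_inverse_one_minus_X_power[of 7] fps_le_zero_if_fps_le_one[OF one_le_parts_2_3_gf]
      fps_le_mult_one_right unfolding parts_2_3_gf_def by simp
qed

lemma G10_ge: "fps_le parts_2_3_gf (G10 :: 'a::linordered_field fps)"
  unfolding fps_le_def
proof
  fix m
  have "fps_cutoff (Suc m) (G10 :: 'a fps) = fps_cutoff (Suc m) (qpoch_fin 10 10 (2 * Suc m)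
          * inverse (qpoch_fin 2 10 (Suc m) * qpoch_fin 3 10 (Suc m) * qpoch_fin 7 10 (Suc (Suc m))
             * qpoch_fin 8 10 (Suc m)))"
    by (rule fps_cutoff_G10) simp
  then show "parts_2_3_gf $ m \<le> (G10 :: 'a fps) $ m"
    using fps_le_nth[OF G10_fin_ge[of "Suc m"], of m] unfolding fps_cutoff_eq_fps_cutoff_iff by simp
qed

theorem mainTheorem5:
  fixes n :: nat
  assumes "n \<ge> 1"
  shows "bprime n \<ge> 2 * of_int \<lfloor>(of_nat n - 1) / (6::rat)\<rfloor>"
proof -
  have "fps_le parts_2_3_gf (G10 * G10 :: rat fps)"
    using G10_ge one_le_parts_2_3_gf fps_le_trans
    by (blast intro: fps_le_mult_one_right fps_le_zero_if_fps_le_one)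
  then have "of_nat ((n - 1) div 6) \<le> (G10 ^ 2 :: rat fps) $ (n - 1)"
    unfolding power2_eq_square by (rule order_trans[OF parts_2_3_gf_nth_ge fps_le_nth])
  moreover have "(of_nat n - 1) / (6::rat) = of_nat (n - 1) / of_nat 6"
    using assms by (simp add: of_nat_diff)
  ultimately show ?thesis
    unfolding bprime_eq_G10_square_nth[OF assms] by (simp only: floor_divide_of_nat_eq)
qed

end
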